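(* There are infinitely many positive integers $N$ such that there is exactly one pair $(A,B)$ of antipalindromic numbers with $N=A/B$.
   Context: A positive integer $n$ is antipalindromic if its binary representation $w=w_1\cdots w_L$ (most significant digit first, no leading zeros) has even length $L$ and satisfies $w_i+w_{L+1-i}=1$ for all $i$. *)

theory Defs
  imports Main
begin

fun bin_digits :: "nat \<Rightarrow> nat list" where
  "bin_digits n = (if n = 0 then [] else n mod 2 # bin_digits (n div 2))"

declare bin_digits.simps [simp del]

text \<open>Antipalindromic: binary word of even length L with w_i + w_{L+1-i} = 1.
  The condition is symmetric under reversal, so LSB-first indexing is equivalent.\<close>
definition antipalindromic :: "nat \<Rightarrow> bool" where
  "antipalindromic n \<longleftrightarrow> n > 0 \<and>
     (let w = rev (bin_digits n); L = length w in
        even L \<and> (\<forall>i < L. w ! i + w ! (L - 1 - i) = 1))"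

end

theory Submission
  imports Defs
begin

text \<open>
  Take N = (4^k - 1)/3 with k \<ge> 2, whose binary word is 0101...01. Then 2N = 1010...10 and 2
  are antipalindromic, and this is the only pair. Indeed, let A = N B with A, B antipalindromic
  and B \<noteq> 2, so that both have length at least 4. Antipalindromic numbers are even and
  N \<equiv> 1 (mod 4), hence A \<equiv> B (mod 8). The three leading bits of an antipalindromic number are
  the complements of its three trailing bits in reverse order, so A and B have the same three
  leading bits c \<ge> 4. As both lengths are even, A/B then lies strictly within a factor
  (c + 1)/c \<le> 5/4 of a power of 4, which (4^k - 1)/3 does not.
\<close>

lemma bin_digits_0 [simp]: "bin_digits 0 = []"
  by (subst bin_digits.simps) simp

lemma bin_digits_nonzero: "n \<noteq> 0 \<Longrightarrow> bin_digits n = n mod 2 # bin_digits (n div 2)"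
  by (subst bin_digits.simps) simp

lemma nth_bin_digits: "i < length (bin_digits n) \<Longrightarrow> bin_digits n ! i = of_bool (bit n i)"
proof (induction n arbitrary: i rule: bin_digits.induct)
  case (1 n)
  then have "n \<noteq> 0"
    by (cases "n = 0") auto
  with 1 show ?case
    by (cases i) (auto simp: bin_digits_nonzero bit_0 bit_Suc odd_iff_mod_2_eq_one)
qed

lemma less_exp_length_bin_digits: "n < 2 ^ length (bin_digits n)"
proof (induction n rule: bin_digits.induct)
  case (1 n)
  then show ?case
    by (cases "n = 0") (auto simp: bin_digits_nonzero)
qed

lemma exp_length_bin_digits_le: "0 < n \<Longrightarrow> 2 ^ length (bin_digits n) \<le> 2 * n"
proof (induction n rule: bin_digits.induct)
  case (1 n)
  then show ?case
    by (cases "n div 2 = 0") (auto simp: bin_digits_nonzero)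
qed

lemma length_bin_digits_eq:
  assumes "n < 2 ^ L" "2 ^ L \<le> 2 * n"
  shows "length (bin_digits n) = L"
proof -
  have "0 < n"
    using assms(2) by (metis gr0I mult_0_right not_le zero_less_power zero_less_numeral)
  then have "2 ^ length (bin_digits n) < (2::nat) ^ Suc L"
    and "2 ^ L < (2::nat) ^ Suc (length (bin_digits n))"
    using assms less_exp_length_bin_digits[of n] exp_length_bin_digits_le[of n] by auto
  then show ?thesis
    by (simp only: power_strict_increasing_iff)
qed

definition antipalindromic_of_length :: "nat \<Rightarrow> nat \<Rightarrow> bool" where
  "antipalindromic_of_length L n \<longleftrightarrow>
     n < 2 ^ L \<and> 2 ^ L \<le> 2 * n \<and> (\<forall>i<L. bit n i \<noteq> bit n (L - 1 - i))"

lemma antipalindromic_of_length_imp_even_length: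
  assumes "antipalindromic_of_length L n"
  shows "even L"
proof (rule ccontr)
  assume "odd L"
  then have "L div 2 < L" "L - 1 - L div 2 = L div 2"
    by (auto elim: oddE)
  then show False
    using assms by (auto simp: antipalindromic_of_length_def)
qed

lemma antipalindromic_iff_of_length:
  "antipalindromic n \<longleftrightarrow> (\<exists>L. antipalindromic_of_length L n)"
proof -
  let ?L = "length (bin_digits n)"
  have mirror_iff: "rev (bin_digits n) ! i + rev (bin_digits n) ! (?L - 1 - i) = 1
      \<longleftrightarrow> bit n i \<noteq> bit n (?L - 1 - i)" if "i < ?L" for i
    using that by (simp add: rev_nth nth_bin_digits Suc_diff_Suc of_bool_def)
  have char: "antipalindromic n \<longleftrightarrow> 0 < n \<and> even ?L \<and> (\<forall>i<?L. bit n i \<noteq> bit n (?L - 1 - i))"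
    unfolding antipalindromic_def Let_def length_rev using mirror_iff by blast
  show ?thesis
  proof
    assume "antipalindromic n"
    with char have "antipalindromic_of_length ?L n"
      using less_exp_length_bin_digits[of n] exp_length_bin_digits_le[of n]
      unfolding antipalindromic_of_length_def by blast
    then show "\<exists>L. antipalindromic_of_length L n" ..
  next
    assume "\<exists>L. antipalindromic_of_length L n"
    then obtain L where L: "antipalindromic_of_length L n" ..
    then have "?L = L" "0 < n"
      using length_bin_digits_eq unfolding antipalindromic_of_length_def by fastforce+
    with L char antipalindromic_of_length_imp_even_length[OF L] show "antipalindromic n"
      unfolding antipalindromic_of_length_def by blast
  qed
qed

lemma antipalindromic_of_length_imp_even:
  assumes "antipalindromic_of_length L n"
  shows "even n"
proof -
  from assms have bounds: "n < 2 ^ L" "2 ^ L \<le> 2 * n"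
    and mirror: "\<forall>i<L. bit n i \<noteq> bit n (L - 1 - i)"
    unfolding antipalindromic_of_length_def by blast+
  obtain M where L: "L = Suc M"
    using bounds by (cases L) auto
  with bounds have "2 ^ M \<le> n" "n < 2 * 2 ^ M"
    by simp_all
  then have "n div 2 ^ M = 1"
    by (simp add: div_nat_eqI)
  then have "bit n (L - 1)"
    by (simp add: L bit_iff_odd)
  moreover have "bit n 0 \<noteq> bit n (L - 1)"
    using mirror[rule_format, of 0] L by simp
  ultimately show ?thesis
    by (simp add: bit_0)
qed

lemma antipalindromic_of_length_ge_4:
  assumes "antipalindromic_of_length L n" "n \<noteq> 2"
  shows "4 \<le> L"
proof (rule ccontr)
  assume "\<not> 4 \<le> L"
  with antipalindromic_of_length_imp_even_length[OF assms(1)] have "L = 0 \<or> L = 2"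
    by presburger
  moreover have "n < 2 ^ L" "2 ^ L \<le> 2 * n"
    using assms(1) unfolding antipalindromic_of_length_def by blast+
  ultimately show False
    using antipalindromic_of_length_imp_even[OF assms(1)] assms(2) by auto
qed

lemma bit_drop_bit_antipalindromic_of_length:
  assumes "antipalindromic_of_length L n" "m \<le> L"
  shows "bit (drop_bit (L - m) n) j \<longleftrightarrow> j < m \<and> \<not> bit (take_bit m n) (m - 1 - j)"
proof -
  have drop: "bit (drop_bit (L - m) n) j \<longleftrightarrow> bit n (L - m + j)"
    by (simp add: bit_drop_bit_eq)
  show ?thesis
  proof (cases "j < m")
    case True
    have "L - 1 - (m - 1 - j) = L - m + j" "m - 1 - j < L"
      using True assms(2) by linarith+
    then have "bit n (L - m + j) \<noteq> bit n (m - 1 - j)"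
      using assms(1) unfolding antipalindromic_of_length_def by metis
    with True show ?thesis
      by (simp add: drop bit_take_bit_iff)
  next
    case False
    have "take_bit L n = n"
      using assms(1) unfolding antipalindromic_of_length_def by (simp add: take_bit_nat_eq_self)
    moreover have "L \<le> L - m + j"
      using False assms(2) by linarith
    ultimately have "\<not> bit n (L - m + j)"
      using bit_take_bit_iff[of L n "L - m + j"] by simp
    with False show ?thesis
      by (simp add: drop)
  qed
qed

lemma drop_bit_antipalindromic_of_length_eq:
  assumes "antipalindromic_of_length L x" "antipalindromic_of_length M y" "m \<le> L" "m \<le> M"
    and "take_bit m x = take_bit m y"
  shows "drop_bit (L - m) x = drop_bit (M - m) y"
  using assms by (simp add: bit_eq_iff bit_drop_bit_antipalindromic_of_length)

lemma drop_bit_nat_bounds: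
  fixes x :: nat
  shows "drop_bit n x * 2 ^ n \<le> x" "x < (drop_bit n x + 1) * 2 ^ n"
  using dividend_less_div_times[of "2 ^ n" x]
  by (simp_all add: drop_bit_eq_div div_times_less_eq_dividend)

lemma drop_bit_antipalindromic_of_length_ge:
  assumes "antipalindromic_of_length L n" "0 < m" "m \<le> L"
  shows "2 ^ (m - 1) \<le> drop_bit (L - m) n"
proof -
  have "2 ^ (m - 1) * 2 ^ (L - m) * 2 = (2::nat) ^ L"
    using assms(2,3) by (simp flip: power_add power_Suc2)
  also have "\<dots> \<le> 2 * n"
    using assms(1) unfolding antipalindromic_of_length_def by blast
  finally have "2 ^ (m - 1) * 2 ^ (L - m) \<le> n"
    by simp
  then show ?thesis
    by (simp add: drop_bit_eq_div less_eq_div_iff_mult_less_eq)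
qed

lemma mult_mod_8_eq_if_mod_4_eq_1:
  fixes r b :: nat
  assumes "r mod 4 = 1" "even b"
  shows "r * b mod 8 = b mod 8"
proof -
  obtain q where "r = 4 * q + 1"
    using assms(1) by (metis div_mult_mod_eq add.commute mult.commute)
  moreover obtain b' where "b = 2 * b'"
    using assms(2) by blast
  ultimately have "r * b = b + 8 * (q * b')"
    by (simp add: algebra_simps)
  then show ?thesis
    by simp
qed

lemma no_ratio_with_same_leading_part:
  fixes A B K P Q c :: nat
  assumes "16 \<le> K" "4 \<le> c" and ratio: "(K - 1) * B = 3 * A"
    and A: "c * P \<le> A" "A < (c + 1) * P"
    and B: "c * Q \<le> B" "B < (c + 1) * Q"
    and scales: "K * Q \<le> P \<or> 4 * P \<le> K * Q"
  shows False
  using scales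
proof
  assume "K * Q \<le> P"
  have "0 < B"
    using B assms(2) by (metis gr0I le_0_eq mult_is_0 not_less_zero not_numeral_le_zero)
  have "3 * c * (K * Q) \<le> 3 * A"
    using A(1) \<open>K * Q \<le> P\<close> by (metis mult_le_mono2 mult.assoc order.trans)
  also have "\<dots> = K * B - B"
    by (simp add: ratio[symmetric] diff_mult_distrib)
  also have "\<dots> < K * B"
    using \<open>0 < B\<close> assms(1) by simp
  also have "\<dots> \<le> (c + 1) * (K * Q)"
    using mult_le_mono2[OF less_imp_le[OF B(2)], of K] by (simp only: ac_simps)
  finally have "3 * c < c + 1"
    by (simp only: mult_less_cancel2)
  then show False
    using assms(2) by simp
next
  assume "4 * P \<le> K * Q"
  have "4 * (K - 1) * c * Q = 4 * ((K - 1) * (c * Q))"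
    by (simp only: ac_simps)
  also have "\<dots> \<le> 4 * (3 * A)"
    using mult_le_mono2[OF B(1), of "K - 1", unfolded ratio] by (intro mult_le_mono2)
  also have "\<dots> < 12 * ((c + 1) * P)"
    using A(2) by linarith
  also have "\<dots> = 3 * (c + 1) * (4 * P)"
    by (simp add: algebra_simps)
  also have "\<dots> \<le> 3 * (c + 1) * (K * Q)"
    using \<open>4 * P \<le> K * Q\<close> by (rule mult_le_mono2)
  finally have "(4 * (K - 1) * c) * Q < (3 * (c + 1) * K) * Q"
    by (simp only: ac_simps)
  then have "4 * (K - 1) * c < 3 * (c + 1) * K"
    by (simp only: mult_less_cancel2)
  moreover obtain K' c' where "K = K' + 16" "c = c' + 4"
    using assms(1,2) by (metis add.commute le_add_diff_inverse)
  ultimately show False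
    by (simp add: algebra_simps)
qed

fun repunit4 :: "nat \<Rightarrow> nat" where
  "repunit4 0 = 0"
| "repunit4 (Suc k) = 4 * repunit4 k + 1"

lemma three_mult_repunit4: "3 * repunit4 k + 1 = 4 ^ k"
  by (induction k) auto

lemma repunit4_pos: "0 < k \<Longrightarrow> 0 < repunit4 k"
  by (cases k) simp_all

lemma repunit4_mod_4: "0 < k \<Longrightarrow> repunit4 k mod 4 = 1"
  by (cases k) simp_all

lemma bit_repunit4: "bit (repunit4 k) i \<longleftrightarrow> even i \<and> i < 2 * k"
proof (induction k arbitrary: i)
  case 0
  then show ?case
    by simp
next
  case (Suc k)
  show ?case
  proof (cases i)
    case 0
    then show ?thesis
      by (simp add: bit_0)
  next
    case (Suc i')
    then show ?thesis
      by (cases i') (simp_all add: bit_Suc bit_0 Suc.IH)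
  qed
qed

lemma antipalindromic_double_repunit4:
  assumes "0 < k"
  shows "antipalindromic (2 * repunit4 k)"
proof -
  have "1 \<le> repunit4 k"
    using assms by (cases k) auto
  moreover have "3 * repunit4 k + 1 = 2 ^ (2 * k)"
    using three_mult_repunit4[of k] by (simp add: power_mult)
  moreover have "bit (2 * repunit4 k) i \<longleftrightarrow> odd i" if "i < 2 * k" for i
    using that by (auto simp: bit_double_iff bit_repunit4 odd_pos)
  ultimately have "antipalindromic_of_length (2 * k) (2 * repunit4 k)"
    unfolding antipalindromic_of_length_def by auto
  then show ?thesis
    by (auto simp: antipalindromic_iff_of_length)
qed

lemma not_repunit4_multiple_with_same_leading_part:
  fixes A B a b c k :: nat
  assumes "2 \<le> k" "4 \<le> c" "even a \<longleftrightarrow> even b"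
    and "c * 2 ^ a \<le> A" "A < (c + 1) * 2 ^ a" "c * 2 ^ b \<le> B" "B < (c + 1) * 2 ^ b"
  shows "A \<noteq> repunit4 k * B"
proof
  assume "A = repunit4 k * B"
  then have ratio: "(4 ^ k - 1) * B = 3 * A"
    by (simp flip: three_mult_repunit4)
  have "(4::nat) ^ 2 \<le> 4 ^ k"
    using assms(1) by (intro power_increasing) auto
  then have "16 \<le> (4::nat) ^ k"
    by simp
  have "b + 2 * k \<le> a \<or> a + 2 \<le> b + 2 * k"
    using assms(3) by presburger
  then have "(2::nat) ^ (b + 2 * k) \<le> 2 ^ a \<or> (2::nat) ^ (a + 2) \<le> 2 ^ (b + 2 * k)"
    by (meson one_le_numeral power_increasing)
  moreover have "(2::nat) ^ (b + 2 * k) = 4 ^ k * 2 ^ b" "(2::nat) ^ (a + 2) = 4 * 2 ^ a"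
    by (simp_all add: power_add power_mult)
  ultimately have "4 ^ k * 2 ^ b \<le> (2::nat) ^ a \<or> 4 * 2 ^ a \<le> (4::nat) ^ k * 2 ^ b"
    by simp
  with \<open>16 \<le> 4 ^ k\<close> assms(2) ratio assms(4-7) show False
    by (rule no_ratio_with_same_leading_part)
qed

lemma antipalindromic_multiple_of_repunit4:
  assumes "2 \<le> k" "antipalindromic A" "antipalindromic B" "A = repunit4 k * B"
  shows "B = 2"
proof (rule ccontr)
  assume "B \<noteq> 2"
  obtain LA LB where A: "antipalindromic_of_length LA A" and B: "antipalindromic_of_length LB B"
    using assms(2,3) by (auto simp: antipalindromic_iff_of_length)
  have "4 \<le> LB"
    using B \<open>B \<noteq> 2\<close> by (rule antipalindromic_of_length_ge_4)
  then have "(2::nat) ^ 4 \<le> 2 ^ LB"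
    by (intro power_increasing) auto
  with B have "8 \<le> B"
    unfolding antipalindromic_of_length_def by simp
  moreover have "B \<le> A"
    using assms(1,4) by (cases k) auto
  ultimately have "4 \<le> LA"
    using A by (intro antipalindromic_of_length_ge_4) auto
  have "take_bit 3 A = take_bit 3 B"
    using assms(1,4) antipalindromic_of_length_imp_even[OF B]
    by (simp add: take_bit_eq_mod repunit4_mod_4 mult_mod_8_eq_if_mod_4_eq_1)
  then have same_leading: "drop_bit (LA - 3) A = drop_bit (LB - 3) B"
    using A B \<open>4 \<le> LA\<close> \<open>4 \<le> LB\<close> by (intro drop_bit_antipalindromic_of_length_eq) auto
  define c where "c = drop_bit (LA - 3) A"
  have "4 \<le> c"
    using drop_bit_antipalindromic_of_length_ge[OF A, of 3] \<open>4 \<le> LA\<close> by (simp add: c_def)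
  moreover have "even (LA - 3) \<longleftrightarrow> even (LB - 3)"
    using antipalindromic_of_length_imp_even_length[OF A] antipalindromic_of_length_imp_even_length[OF B]
      \<open>4 \<le> LA\<close> \<open>4 \<le> LB\<close> by presburger
  moreover have "c * 2 ^ (LA - 3) \<le> A" "A < (c + 1) * 2 ^ (LA - 3)"
    and "c * 2 ^ (LB - 3) \<le> B" "B < (c + 1) * 2 ^ (LB - 3)"
    using drop_bit_nat_bounds[where n = "LA - 3" and x = A]
      drop_bit_nat_bounds[where n = "LB - 3" and x = B]
    unfolding c_def same_leading by simp_all
  ultimately have "A \<noteq> repunit4 k * B"
    by (rule not_repunit4_multiple_with_same_leading_part[OF assms(1)])
  with assms(4) show False
    by contradiction
qed

lemma ex1_antipalindromic_pair_repunit4: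
  assumes "2 \<le> k"
  shows "\<exists>!p. antipalindromic (fst p) \<and> antipalindromic (snd p) \<and> fst p = repunit4 k * snd p"
proof -
  have "antipalindromic (repunit4 k * 2)" "antipalindromic 2"
    using antipalindromic_double_repunit4[of k] antipalindromic_double_repunit4[of 1] assms
    by (simp_all add: mult.commute)
  moreover have "p = (repunit4 k * 2, 2)"
    if "antipalindromic (fst p)" "antipalindromic (snd p)" "fst p = repunit4 k * snd p" for p
    using antipalindromic_multiple_of_repunit4[OF assms] that by (metis prod.collapse)
  ultimately show ?thesis
    by (intro ex1I[of _ "(repunit4 k * 2, 2)"]) auto
qed

theorem theorem22:
  shows "infinite {N :: nat. N > 0 \<and>
           (\<exists>!p :: nat \<times> nat. antipalindromic (fst p) \<and> antipalindromic (snd p)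
                 \<and> fst p = N * snd p)}"
    (is "infinite ?S")
proof (rule infinite_super)
  show "repunit4 ` {2..} \<subseteq> ?S"
    using ex1_antipalindromic_pair_repunit4 by (fastforce intro: repunit4_pos)
  have "strict_mono repunit4"
    by (simp add: strict_mono_Suc_iff)
  then show "infinite (repunit4 ` {2..})"
    by (metis finite_imageD infinite_Ici strict_mono_imp_inj_on)
qed

end
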